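(* Let $\mathcal{A}$ be a weighted pushdown system with state set $Q$ and stack alphabet $\Gamma$, let $c_1,c_2$ be configurations and $n\in\mathbb{Z}$. Suppose there is a path from $c_1$ to $c_2$ of total weight at least $n$, and let $d\in\mathbb{N}$ be the minimum additional stack height among all paths from $c_1$ to $c_2$ with total weight at least $n$. If $d\geq(|Q|\cdot|\Gamma|)^2$, then there is a path $\pi^*$ from $c_1$ to $c_2$ with additional stack height $d$ that has a pumpable pair $(p_1,p_2)$ with $w(p_1)+w(p_2)>0$.
   Context: A weighted pushdown system (WPS) is $\mathcal{A}=\langle Q,\Gamma,q_0,E,w\rangle$ with finite state set $Q$, initial state $q_0$, finite stack alphabet $\Gamma$ containing a bottom symbol $\bot$ that can be neither pushed nor popped, edges $E\subseteq(Q\times\Gamma)\times(Q\times\mathrm{Com}(\Gamma))$ where $\mathrm{Com}(\Gamma)=\{\mathit{skip},\mathit{pop}\}\cup\{\mathit{push}(z):z\in\Gamma\}$, and weights $w:E\to\mathbb{Z}$. Configurations are $(\alpha,q)$ with $\alpha\in\Gamma^+$, $q\in Q$; $(\alpha',q')$ is a successor of $(\alpha,q)$ if some edge $(q,\gamma,q',\mathit{com})$ has $\gamma$ the top of $\alpha$ and $\alpha'=\mathit{com}(\alpha)$. A path is a sequence of successive configurations (equivalently a start configuration plus a sequence of edges); its weight $w(\pi)$ is the sum of the weights of its edges. For a finite path with stacks $\alpha_1,\dots,\alpha_n$, $\mathrm{ASH}(\pi)=\max_i|\alpha_i|-\max\{|\alpha_1|,|\alpha_n|\}$. A pumpable pair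 of a path $\pi=\langle c_1e_1e_2\dots\rangle$ is a pair of nonempty disjoint blocks of consecutive edges $p_1$ (earlier) and $p_2$ (later) such that for every $j\ge 0$, repeating $p_1$ and $p_2$ each exactly $j$ times (in place) yields a valid path from $c_1$; $w(p_i)$ is the sum of weights of the edges of $p_i$. *)

theory Defs
  imports Main
begin

datatype 'g scom = Skip | Pop | Push 'g

type_synonym ('q, 'g) edge = "('q \<times> 'g) \<times> ('q \<times> 'g scom)"

text \<open>Configurations (alpha, q); the stack is a list whose head is the top symbol.\<close>
type_synonym ('q, 'g) config = "'g list \<times> 'q"

record ('q, 'g) wps =
  states :: "'q set"
  alphabet :: "'g set"
  init :: 'q
  bottom :: 'g
  edges :: "('q, 'g) edge set"
  weight :: "('q, 'g) edge \<Rightarrow> int"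

fun com_ok :: "'g set \<Rightarrow> 'g scom \<Rightarrow> bool" where
  "com_ok G Skip = True"
| "com_ok G Pop = True"
| "com_ok G (Push z) = (z \<in> G)"

definition is_wps :: "('q, 'g) wps \<Rightarrow> bool" where
  "is_wps A \<longleftrightarrow>
     finite (states A) \<and> finite (alphabet A) \<and> init A \<in> states A \<and>
     bottom A \<in> alphabet A \<and>
     (\<forall>((q, g), (q', c)) \<in> edges A.
        q \<in> states A \<and> g \<in> alphabet A \<and> q' \<in> states A \<and> com_ok (alphabet A) c \<and>
        c \<noteq> Push (bottom A) \<and> \<not> (g = bottom A \<and> c = Pop))"

fun apply_com :: "'g scom \<Rightarrow> 'g list \<Rightarrow> 'g list" where
  "apply_com Skip \<alpha> = \<alpha>"
| "apply_com Pop \<alpha> = tl \<alpha>"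
| "apply_com (Push z) \<alpha> = z # \<alpha>"

definition is_config :: "('q, 'g) wps \<Rightarrow> ('q, 'g) config \<Rightarrow> bool" where
  "is_config A c \<longleftrightarrow> fst c \<noteq> [] \<and> set (fst c) \<subseteq> alphabet A \<and> snd c \<in> states A"

definition step :: "('q, 'g) wps \<Rightarrow> ('q, 'g) edge \<Rightarrow> ('q, 'g) config \<Rightarrow> ('q, 'g) config option" where
  "step A e c =
     (let ((q, g), (q', cm)) = e; (\<alpha>, p) = c in
      if e \<in> edges A \<and> p = q \<and> \<alpha> \<noteq> [] \<and> hd \<alpha> = g \<and> is_config A (apply_com cm \<alpha>, q')
      then Some (apply_com cm \<alpha>, q') else None)"

fun run :: "('q, 'g) wps \<Rightarrow> ('q, 'g) config \<Rightarrow> ('q, 'g) edge list \<Rightarrow> ('q, 'g) config list option" where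
  "run A c [] = Some [c]"
| "run A c (e # es) =
     (case step A e c of None \<Rightarrow> None
      | Some c' \<Rightarrow> (case run A c' es of None \<Rightarrow> None | Some cs \<Rightarrow> Some (c # cs)))"

definition is_path :: "('q, 'g) wps \<Rightarrow> ('q, 'g) config \<Rightarrow> ('q, 'g) edge list \<Rightarrow> bool" where
  "is_path A c es \<longleftrightarrow> is_config A c \<and> run A c es \<noteq> None"

definition path_from_to ::
  "('q, 'g) wps \<Rightarrow> ('q, 'g) config \<Rightarrow> ('q, 'g) edge list \<Rightarrow> ('q, 'g) config \<Rightarrow> bool" where
  "path_from_to A c1 es c2 \<longleftrightarrow> is_path A c1 es \<and> last (the (run A c1 es)) = c2"

definition path_weight :: "('q, 'g) wps \<Rightarrow> ('q, 'g) edge list \<Rightarrow> int" where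
  "path_weight A es = sum_list (map (weight A) es)"

definition ASH :: "('q, 'g) wps \<Rightarrow> ('q, 'g) config \<Rightarrow> ('q, 'g) edge list \<Rightarrow> nat" where
  "ASH A c es =
     (let cs = the (run A c es); hs = map (\<lambda>c. length (fst c)) cs in
      Max (set hs) - max (hd hs) (last hs))"

definition pump :: "'e list \<Rightarrow> nat \<Rightarrow> nat \<Rightarrow> nat \<Rightarrow> nat \<Rightarrow> nat \<Rightarrow> 'e list" where
  "pump es i k1 j k2 m =
     take i es @ concat (replicate m (take k1 (drop i es)))
     @ take (j - (i + k1)) (drop (i + k1) es)
     @ concat (replicate m (take k2 (drop j es))) @ drop (j + k2) es"

text \<open>(i,k1,j,k2) describes a pumpable pair p1 = es[i..<i+k1], p2 = es[j..<j+k2].\<close>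
definition pumpable_pair ::
  "('q, 'g) wps \<Rightarrow> ('q, 'g) config \<Rightarrow> ('q, 'g) edge list \<Rightarrow> nat \<Rightarrow> nat \<Rightarrow> nat \<Rightarrow> nat \<Rightarrow> bool" where
  "pumpable_pair A c es i k1 j k2 \<longleftrightarrow>
     0 < k1 \<and> 0 < k2 \<and> i + k1 \<le> j \<and> j + k2 \<le> length es \<and>
     (\<forall>m. is_path A c (pump es i k1 j k2 m))"

end

theory Submission
  imports Defs
begin

(* Among the paths from c1 to c2 of weight at least n and minimal additional stack height d
   we pick a shortest one.  Along its run, every stack level k between the heights of the two
   endpoints and the maximal height is crossed upwards for the last time (at a k) and
   downwards for the first time (at b k) around the peak; these crossings are nested and
   the run stays at height at least k in between.  If d >= (|Q| |Gamma|)^2, two levels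
   k < l agree on the state and top symbol at a and on the state at b (pigeonhole).  By the
   frame property of pushdown runs, the blocks [a k, a l) and [b l, b k) can then be
   repeated any number of times, i.e. they form a pumpable pair, and deleting both keeps
   the run below its old maximum.  Deleting a pair of nonpositive total weight would give a
   shorter path of the same additional stack height and weight at least n; so the weight
   of the pair is positive. *)

lemma step_eq:
  "step A ((q0, g), (q1, cm)) (\<alpha>, p) =
     (if ((q0, g), (q1, cm)) \<in> edges A \<and> p = q0 \<and> \<alpha> \<noteq> [] \<and> hd \<alpha> = g \<and> is_config A (apply_com cm \<alpha>, q1)
      then Some (apply_com cm \<alpha>, q1) else None)"
  by (simp add: step_def)

lemma run_Cons_Some:
  assumes "run A c (e # es) = Some cs"
  obtains c' cs' where "step A e c = Some c'" "run A c' es = Some cs'" "cs = c # cs'"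
  using assms by (auto split: option.splits)

lemma run_shape:
  assumes "run A c es = Some cs"
  shows "cs \<noteq> []" "hd cs = c" "length cs = Suc (length es)"
  using assms by (induction es arbitrary: c cs) (auto split: option.splits)

lemma run_append:
  assumes "run A c es1 = Some cs1" and "run A (last cs1) es2 = Some cs2"
  shows "run A c (es1 @ es2) = Some (butlast cs1 @ cs2)"
  using assms
proof (induction es1 arbitrary: c cs1)
  case Nil
  then show ?case by auto
next
  case (Cons e es1)
  from Cons.prems(1) obtain c' cs' where s: "step A e c = Some c'" and r: "run A c' es1 = Some cs'"
    and cs1: "cs1 = c # cs'" by (rule run_Cons_Some)
  have "cs' \<noteq> []" using run_shape(1)[OF r] .
  with Cons.prems(2) cs1 have "run A c' (es1 @ es2) = Some (butlast cs' @ cs2)"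
    using Cons.IH[OF r] by auto
  with s cs1 \<open>cs' \<noteq> []\<close> show ?case by auto
qed

lemma run_take:
  assumes "run A c es = Some cs" and "i \<le> length es"
  shows "run A c (take i es) = Some (take (Suc i) cs)"
  using assms
proof (induction es arbitrary: c cs i)
  case (Cons e es)
  from Cons.prems(1) obtain c' cs' where "step A e c = Some c'" "run A c' es = Some cs'" "cs = c # cs'"
    by (rule run_Cons_Some)
  with Cons show ?case by (cases i) auto
qed auto

lemma run_drop:
  assumes "run A c es = Some cs" and "i \<le> length es"
  shows "run A (cs ! i) (drop i es) = Some (drop i cs)"
  using assms
proof (induction es arbitrary: c cs i)
  case (Cons e es)
  from Cons.prems(1) obtain c' cs' where "step A e c = Some c'" "run A c' es = Some cs'" "cs = c # cs'"
    by (rule run_Cons_Some)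
  with Cons show ?case by (cases i) auto
qed auto

lemma run_configs:
  assumes "run A c es = Some cs" and "is_config A c"
  shows "\<forall>x\<in>set cs. is_config A x"
  using assms
proof (induction es arbitrary: c cs)
  case (Cons e es)
  from Cons.prems(1) obtain c' cs' where s: "step A e c = Some c'" and r: "run A c' es = Some cs'"
    and "cs = c # cs'" by (rule run_Cons_Some)
  moreover have "is_config A c'"
    using s by (cases e; cases c) (auto simp: step_eq split: if_splits)
  ultimately show ?case using Cons.IH[OF r] Cons.prems(2) by auto
qed auto

lemma run_height_step:
  assumes "run A c es = Some cs" and "t < length es"
  shows "length (fst (cs ! Suc t)) \<le> Suc (length (fst (cs ! t))) \<and>
         length (fst (cs ! t)) \<le> Suc (length (fst (cs ! Suc t)))"
  using assms
proof (induction es arbitrary: c cs t)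
  case (Cons e es)
  from Cons.prems(1) obtain c' cs' where s: "step A e c = Some c'" and r: "run A c' es = Some cs'"
    and cs: "cs = c # cs'" by (rule run_Cons_Some)
  have c': "cs' ! 0 = c'" using run_shape(1,2)[OF r] by (simp add: hd_conv_nth)
  have "length (fst c') \<le> Suc (length (fst c)) \<and> length (fst c) \<le> Suc (length (fst c'))"
    using s by (cases e; cases c; cases "snd (snd e)") (auto simp: step_eq split: if_splits)
  with Cons.IH[OF r] Cons.prems(2) c' cs show ?case by (cases t) auto
qed auto

text \<open>reaches A c es c' P: following es from c succeeds, ends in c', and every visited
  stack height satisfies P.  Typical P: "stays above the height of some stack suffix",
  "stays below a bound".\<close>
definition reaches ::
  "('q, 'g) wps \<Rightarrow> ('q, 'g) config \<Rightarrow> ('q, 'g) edge list \<Rightarrow> ('q, 'g) config \<Rightarrow> (nat \<Rightarrow> bool) \<Rightarrow> bool" where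
  "reaches A c es c' P \<longleftrightarrow>
     (\<exists>cs. run A c es = Some cs \<and> last cs = c' \<and> (\<forall>x\<in>set cs. P (length (fst x))))"

lemma reaches_mono:
  assumes "reaches A c es c' P" and "\<And>h. P h \<Longrightarrow> Q h"
  shows "reaches A c es c' Q"
  using assms unfolding reaches_def by blast

lemma reaches_append:
  assumes "reaches A c es1 c' P" and "reaches A c' es2 c'' P"
  shows "reaches A c (es1 @ es2) c'' P"
proof -
  obtain cs1 where r1: "run A c es1 = Some cs1" "last cs1 = c'" "\<forall>x\<in>set cs1. P (length (fst x))"
    using assms(1) unfolding reaches_def by blast
  obtain cs2 where r2: "run A c' es2 = Some cs2" "last cs2 = c''" "\<forall>x\<in>set cs2. P (length (fst x))"
    using assms(2) unfolding reaches_def by blast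
  have "run A c (es1 @ es2) = Some (butlast cs1 @ cs2)"
    using run_append[OF r1(1)] r1(2) r2(1) by simp
  moreover have "last (butlast cs1 @ cs2) = c''" using run_shape(1)[OF r2(1)] r2(2) by simp
  moreover have "\<forall>x\<in>set (butlast cs1 @ cs2). P (length (fst x))"
    using r1(3) r2(3) by (auto dest: in_set_butlastD)
  ultimately show ?thesis unfolding reaches_def by blast
qed

lemma reaches_iterate:
  assumes "\<And>x. x < m \<Longrightarrow> reaches A (g x) p (g (Suc x)) P" and "P (length (fst (g 0)))"
  shows "reaches A (g 0) (concat (replicate m p)) (g m) P"
  using assms(1)
proof (induction m)
  case 0
  show ?case using assms(2) unfolding reaches_def by simp
next
  case (Suc m)
  have "reaches A (g 0) (concat (replicate m p)) (g m) P" using Suc by simp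
  moreover have "concat (replicate (Suc m) p) = concat (replicate m p) @ p"
    by (induction m) auto
  ultimately show ?case using reaches_append Suc.prems[of m] by fastforce
qed

lemma reaches_segment:
  assumes r: "run A c es = Some cs" and ij: "i \<le> j" "j \<le> length es"
    and P: "\<And>t. i \<le> t \<Longrightarrow> t \<le> j \<Longrightarrow> P (length (fst (cs ! t)))"
  shows "reaches A (cs ! i) (take (j - i) (drop i es)) (cs ! j) P"
proof -
  have len: "length cs = Suc (length es)" using run_shape(3)[OF r] .
  define seg where "seg = take (Suc (j - i)) (drop i cs)"
  have "run A (cs ! i) (take (j - i) (drop i es)) = Some seg"
    using run_take[OF run_drop[OF r], of i "j - i"] ij unfolding seg_def by simp
  moreover have "last seg = cs ! j" using ij len unfolding seg_def by (simp add: last_conv_nth)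
  moreover have "\<forall>x\<in>set seg. P (length (fst x))"
  proof
    fix x assume "x \<in> set seg"
    then obtain u where "u < length seg" "x = seg ! u" by (auto simp: in_set_conv_nth)
    then have "u \<le> j - i" "x = cs ! (i + u)" using ij len unfolding seg_def by auto
    then show "P (length (fst x))" using P[of "i + u"] ij by simp
  qed
  ultimately show ?thesis unfolding reaches_def by blast
qed

lemma apply_com_append:
  assumes "\<not> (cm = Pop \<and> \<beta> = [])"
  shows "apply_com cm (\<beta> @ \<tau>) = apply_com cm \<beta> @ \<tau>"
  using assms by (cases cm; cases \<beta>) auto

definition replace_suffix :: "'g list \<Rightarrow> 'g list \<Rightarrow> ('q, 'g) config \<Rightarrow> ('q, 'g) config" where
  "replace_suffix \<tau> \<tau>' c = (take (length (fst c) - length \<tau>) (fst c) @ \<tau>', snd c)"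

lemma replace_suffix_append [simp]: "replace_suffix \<tau> \<tau>' (\<beta> @ \<tau>, q) = (\<beta> @ \<tau>', q)"
  by (simp add: replace_suffix_def)

lemma run_frame:
  assumes "run A (\<beta> @ \<tau>, q) es = Some cs" and "\<forall>x\<in>set cs. length \<tau> \<le> length (fst x)"
    and "\<tau> \<noteq> []" "\<tau>' \<noteq> []" "hd \<tau>' = hd \<tau>" "set \<tau>' \<subseteq> alphabet A"
  shows "(\<forall>x\<in>set cs. \<exists>\<beta>'. fst x = \<beta>' @ \<tau>) \<and>
         run A (\<beta> @ \<tau>', q) es = Some (map (replace_suffix \<tau> \<tau>') cs)"
  using assms(1,2)
proof (induction es arbitrary: \<beta> q cs)
  case Nil
  then show ?case by auto
next
  case (Cons e es)
  from Cons.prems(1) obtain c' cs' where s: "step A e (\<beta> @ \<tau>, q) = Some c'"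
    and r: "run A c' es = Some cs'" and cs: "cs = (\<beta> @ \<tau>, q) # cs'" by (rule run_Cons_Some)
  obtain q0 g q1 cm where e: "e = ((q0, g), (q1, cm))" by (cases e) auto
  have c': "c' = (apply_com cm (\<beta> @ \<tau>), q1)"
    and enabled: "e \<in> edges A" "q = q0" "hd (\<beta> @ \<tau>) = g" "is_config A (apply_com cm (\<beta> @ \<tau>), q1)"
    using s by (auto simp: e step_eq split: if_splits)
  have "c' \<in> set cs'" using run_shape(1,2)[OF r] by (metis list.set_sel(1))
  then have "length \<tau> \<le> length (apply_com cm (\<beta> @ \<tau>))" using Cons.prems(2) cs c' by auto
  then have no_pop: "\<not> (cm = Pop \<and> \<beta> = [])" using assms(3) by (cases \<tau>) auto
  note ac = apply_com_append[OF no_pop]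
  have "hd (\<beta> @ \<tau>') = hd (\<beta> @ \<tau>)" using assms(3-5) by (cases \<beta>) auto
  moreover have "is_config A (apply_com cm \<beta> @ \<tau>', q1)"
    using enabled(4) assms(4,6) ac[of \<tau>] by (auto simp: is_config_def)
  ultimately have s': "step A e (\<beta> @ \<tau>', q) = Some (apply_com cm \<beta> @ \<tau>', q1)"
    using enabled assms(4) ac by (auto simp: e step_eq)
  have "run A (apply_com cm \<beta> @ \<tau>, q1) es = Some cs'" using r c' ac by simp
  moreover have "\<forall>x\<in>set cs'. length \<tau> \<le> length (fst x)" using Cons.prems(2) cs by simp
  ultimately have "(\<forall>x\<in>set cs'. \<exists>\<beta>'. fst x = \<beta>' @ \<tau>) \<and>
        run A (apply_com cm \<beta> @ \<tau>', q1) es = Some (map (replace_suffix \<tau> \<tau>') cs')"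
    by (rule Cons.IH)
  with s' cs show ?case by simp
qed

text \<open>Frame property: a run that never dips into the stack suffix \<tau> does not depend on it,
  so it can be replayed on any suffix \<tau>' with the same top symbol; heights shift by
  |\<tau>'| - |\<tau>|.\<close>
lemma reaches_frame:
  assumes "reaches A (\<beta> @ \<tau>, q) es (\<gamma>, q') (\<lambda>h. length \<tau> \<le> h \<and> P h)"
    and "\<tau> \<noteq> []" "\<tau>' \<noteq> []" "hd \<tau>' = hd \<tau>" "set \<tau>' \<subseteq> alphabet A"
  shows "\<exists>\<gamma>'. \<gamma> = \<gamma>' @ \<tau> \<and>
           reaches A (\<beta> @ \<tau>', q) es (\<gamma>' @ \<tau>', q') (\<lambda>h. length \<tau>' \<le> h \<and> P (h - length \<tau>' + length \<tau>))"
proof -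
  obtain cs where r: "run A (\<beta> @ \<tau>, q) es = Some cs" and l: "last cs = (\<gamma>, q')"
    and hs: "\<forall>x\<in>set cs. length \<tau> \<le> length (fst x) \<and> P (length (fst x))"
    using assms(1) unfolding reaches_def by blast
  have frame: "\<forall>x\<in>set cs. \<exists>\<beta>'. fst x = \<beta>' @ \<tau>"
    and r': "run A (\<beta> @ \<tau>', q) es = Some (map (replace_suffix \<tau> \<tau>') cs)"
    using run_frame[OF r _ assms(2-5)] hs by auto
  have "cs \<noteq> []" using run_shape(1)[OF r] .
  then obtain \<gamma>' where "fst (last cs) = \<gamma>' @ \<tau>" using frame by (meson last_in_set)
  then have \<gamma>: "\<gamma> = \<gamma>' @ \<tau>" using l by simp
  have "last (map (replace_suffix \<tau> \<tau>') cs) = (\<gamma>' @ \<tau>', q')"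
    using \<open>cs \<noteq> []\<close> l \<gamma> by (simp add: last_map)
  moreover have "\<forall>y\<in>set (map (replace_suffix \<tau> \<tau>') cs).
      length \<tau>' \<le> length (fst y) \<and> P (length (fst y) - length \<tau>' + length \<tau>)"
  proof
    fix y assume "y \<in> set (map (replace_suffix \<tau> \<tau>') cs)"
    then obtain x where x: "x \<in> set cs" "y = replace_suffix \<tau> \<tau>' x" by auto
    then obtain \<beta>' where "fst x = \<beta>' @ \<tau>" using frame by blast
    then have "y = (\<beta>' @ \<tau>', snd x)" using x(2) by (cases x) simp
    then show "length \<tau>' \<le> length (fst y) \<and> P (length (fst y) - length \<tau>' + length \<tau>)"
      using hs x(1) \<open>fst x = \<beta>' @ \<tau>\<close> by force
  qed
  ultimately show ?thesis using r' \<gamma> unfolding reaches_def by blast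
qed

text \<open>Suppose a run climbs from stack \<tau> to stack \<beta> @ \<tau> along p1
  staying above \<tau>, then moves along mid staying above \<beta> @ \<tau>, and finally descends along p2
  back to \<tau>, staying above \<tau>; suppose moreover the control states agree at the start of
  p1 and mid, and at the end of mid and p2.  Then each round of p1 pushes another copy of
  \<beta> and each round of p2 removes one, so p1^m mid p2^m is a run for all m; for m = 0
  the stacks are lower than in the original run.\<close>
lemma pump_nested_runs:
  assumes p1: "reaches A (\<tau>, q) p1 (\<beta> @ \<tau>, q) (\<lambda>h. length \<tau> \<le> h)"
    and mid: "reaches A (\<beta> @ \<tau>, q) mid (\<beta> @ \<tau>, q') (\<lambda>h. length (\<beta> @ \<tau>) \<le> h \<and> h \<le> B)"
    and p2: "reaches A (\<beta> @ \<tau>, q') p2 (\<tau>, q') (\<lambda>h. length \<tau> \<le> h)"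
    and \<tau>: "\<tau> \<noteq> []" "hd (\<beta> @ \<tau>) = hd \<tau>" "set (\<beta> @ \<tau>) \<subseteq> alphabet A"
  shows "reaches A (\<tau>, q) (concat (replicate m p1) @ mid @ concat (replicate m p2)) (\<tau>, q') (\<lambda>_. True)"
    and "reaches A (\<tau>, q) mid (\<tau>, q') (\<lambda>h. h \<le> B)"
proof -
  define pw where "pw x = concat (replicate x \<beta>) @ \<tau>" for x
  have pw_Suc: "pw (Suc x) = \<beta> @ pw x" for x unfolding pw_def by simp
  have pw_ne: "pw x \<noteq> []" for x unfolding pw_def using \<tau>(1) by simp
  have pw_hd: "hd (pw x) = hd \<tau>" for x
  proof (induction x)
    case (Suc x)
    then show ?case using \<tau>(2) by (cases \<beta>) (auto simp: pw_Suc)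
  qed (simp add: pw_def)
  have pw_set: "set (pw x) \<subseteq> alphabet A" for x unfolding pw_def using \<tau>(3) by auto
  have up: "reaches A (pw x, q) p1 (pw (Suc x), q) (\<lambda>_. True)" for x
  proof -
    have "reaches A ([] @ \<tau>, q) p1 (\<beta> @ \<tau>, q) (\<lambda>h. length \<tau> \<le> h \<and> True)"
      using p1 by (simp add: reaches_mono)
    from reaches_frame[OF this \<tau>(1) pw_ne pw_hd pw_set, of x] show ?thesis
      by (auto simp: pw_Suc elim: reaches_mono)
  qed
  have down: "reaches A (pw (Suc x), q') p2 (pw x, q') (\<lambda>_. True)" for x
  proof -
    have "reaches A (\<beta> @ \<tau>, q') p2 ([] @ \<tau>, q') (\<lambda>h. length \<tau> \<le> h \<and> True)"
      using p2 by (simp add: reaches_mono)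
    from reaches_frame[OF this \<tau>(1) pw_ne pw_hd pw_set, of x] show ?thesis
      by (auto simp: pw_Suc elim: reaches_mono)
  qed
  have across: "reaches A (pw x, q) mid (pw x, q')
      (\<lambda>h. length (pw x) \<le> h \<and> h - length (pw x) + length (\<beta> @ \<tau>) \<le> B)" for x
  proof -
    have "reaches A ([] @ (\<beta> @ \<tau>), q) mid ([] @ (\<beta> @ \<tau>), q') (\<lambda>h. length (\<beta> @ \<tau>) \<le> h \<and> h \<le> B)"
      using mid by simp
    moreover have "hd (pw x) = hd (\<beta> @ \<tau>)" using pw_hd \<tau>(2) by simp
    ultimately show ?thesis using reaches_frame[OF _ _ pw_ne _ pw_set] \<tau>(1) by fastforce
  qed
  have "reaches A (pw 0, q) (concat (replicate m p1)) (pw m, q) (\<lambda>_. True)"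
    using reaches_iterate[of m A "\<lambda>x. (pw x, q)" p1] up by simp
  moreover have "reaches A (pw m, q) mid (pw m, q') (\<lambda>_. True)"
    using across by (rule reaches_mono) simp
  moreover have "reaches A (pw m, q') (concat (replicate m p2)) (pw 0, q') (\<lambda>_. True)"
  proof -
    have "pw (m - x) = pw (Suc (m - Suc x))" if "x < m" for x
      using that by (simp add: Suc_diff_Suc)
    then show ?thesis using reaches_iterate[of m A "\<lambda>x. (pw (m - x), q')" p2] down by simp
  qed
  ultimately show "reaches A (\<tau>, q) (concat (replicate m p1) @ mid @ concat (replicate m p2)) (\<tau>, q') (\<lambda>_. True)"
    by (auto simp: pw_def intro: reaches_append)
  show "reaches A (\<tau>, q) mid (\<tau>, q') (\<lambda>h. h \<le> B)"
  proof (rule reaches_mono)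
    show "reaches A (\<tau>, q) mid (\<tau>, q') (\<lambda>h. length \<tau> \<le> h \<and> h - length \<tau> + length (\<beta> @ \<tau>) \<le> B)"
      using across[of 0] by (simp add: pw_def)
  qed auto
qed

lemma pump_split:
  assumes "i1 \<le> i2" "i2 \<le> j2" "j2 \<le> j1"
  shows "pump es i1 (i2 - i1) j2 (j1 - j2) m =
    take i1 es @ concat (replicate m (take (i2 - i1) (drop i1 es))) @ take (j2 - i2) (drop i2 es)
    @ concat (replicate m (take (j1 - j2) (drop j2 es))) @ drop j1 es"
  using assms by (simp add: pump_def)

lemma reaches_keeps_suffix:
  assumes "reaches A (\<beta> @ \<tau>, q) es (\<gamma>, q') (\<lambda>h. length \<tau> \<le> h)"
    and "\<tau> \<noteq> []" "set \<tau> \<subseteq> alphabet A"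
  shows "\<exists>\<gamma>'. \<gamma> = \<gamma>' @ \<tau>"
proof -
  have "reaches A (\<beta> @ \<tau>, q) es (\<gamma>, q') (\<lambda>h. length \<tau> \<le> h \<and> True)"
    using assms(1) by (rule reaches_mono) simp
  from reaches_frame[OF this assms(2) assms(2) refl assms(3)] show ?thesis by blast
qed

lemma nested_positions_stacks:
  assumes r: "run A c es = Some cs" and c: "is_config A c"
    and ord: "i1 \<le> i2" "i2 \<le> j2" "j2 \<le> j1" "j1 \<le> length es"
    and lev: "length (fst (cs ! j1)) = length (fst (cs ! i1))"
      "length (fst (cs ! j2)) = length (fst (cs ! i2))"
    and above: "\<And>t. i1 \<le> t \<Longrightarrow> t \<le> j1 \<Longrightarrow> length (fst (cs ! i1)) \<le> length (fst (cs ! t))"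
      "\<And>t. i2 \<le> t \<Longrightarrow> t \<le> j2 \<Longrightarrow> length (fst (cs ! i2)) \<le> length (fst (cs ! t))"
    and match: "snd (cs ! i2) = snd (cs ! i1)" "hd (fst (cs ! i2)) = hd (fst (cs ! i1))"
      "snd (cs ! j2) = snd (cs ! j1)"
  obtains \<tau> \<beta> q q' where "cs ! i1 = (\<tau>, q)" "cs ! i2 = (\<beta> @ \<tau>, q)" "cs ! j2 = (\<beta> @ \<tau>, q')"
    "cs ! j1 = (\<tau>, q')" "\<tau> \<noteq> []" "hd (\<beta> @ \<tau>) = hd \<tau>" "set (\<beta> @ \<tau>) \<subseteq> alphabet A"
proof -
  define \<tau> where "\<tau> = fst (cs ! i1)"
  have cfg: "is_config A (cs ! t)" if "t \<le> length es" for t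
    using run_configs[OF r c] run_shape(3)[OF r] that by simp
  have \<tau>: "\<tau> \<noteq> []" "set \<tau> \<subseteq> alphabet A" using cfg[of i1] ord unfolding \<tau>_def is_config_def by auto
  have "reaches A (cs ! i1) (take (i2 - i1) (drop i1 es)) (cs ! i2) (\<lambda>h. length \<tau> \<le> h)"
    by (rule reaches_segment[OF r ord(1)]) (use ord above(1) in \<open>auto simp: \<tau>_def\<close>)
  then obtain \<beta> where \<beta>: "fst (cs ! i2) = \<beta> @ \<tau>"
    using reaches_keeps_suffix[of A "[]" \<tau> _ _ "fst (cs ! i2)"] \<tau> unfolding \<tau>_def
    by (metis append_Nil prod.collapse)
  have set\<beta>: "set (\<beta> @ \<tau>) \<subseteq> alphabet A" using cfg[of i2] ord \<beta> unfolding is_config_def by simp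
  have "reaches A (cs ! i2) (take (j2 - i2) (drop i2 es)) (cs ! j2) (\<lambda>h. length (\<beta> @ \<tau>) \<le> h)"
    by (rule reaches_segment[OF r ord(2)]) (use ord above(2) \<beta> in auto)
  then obtain \<gamma> where "fst (cs ! j2) = \<gamma> @ (\<beta> @ \<tau>)"
    using reaches_keeps_suffix[of A "[]" "\<beta> @ \<tau>" _ _ "fst (cs ! j2)"] \<tau>(1) set\<beta> \<beta>
    by (metis append_Nil append_is_Nil_conv prod.collapse)
  then have \<beta>': "fst (cs ! j2) = \<beta> @ \<tau>" using lev(2) \<beta> by simp
  have "reaches A (cs ! j2) (take (j1 - j2) (drop j2 es)) (cs ! j1) (\<lambda>h. length \<tau> \<le> h)"
    by (rule reaches_segment[OF r ord(3)]) (use ord above(1) in \<open>auto simp: \<tau>_def\<close>)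
  then obtain \<gamma>' where "fst (cs ! j1) = \<gamma>' @ \<tau>"
    using reaches_keeps_suffix[of A \<beta> \<tau> _ _ "fst (cs ! j1)"] \<tau> \<beta>' by (metis prod.collapse)
  then have "fst (cs ! j1) = \<tau>" using lev(1) unfolding \<tau>_def by simp
  then show ?thesis
    using that[of \<tau> "snd (cs ! i1)" \<beta> "snd (cs ! j1)"] \<beta> \<beta>' match \<tau> set\<beta> unfolding \<tau>_def
    by (simp add: prod_eq_iff)
qed

lemma pump_nested_positions:
  assumes r: "run A c es = Some cs" and c: "is_config A c"
    and ord: "i1 \<le> i2" "i2 \<le> j2" "j2 \<le> j1" "j1 \<le> length es"
    and lev: "length (fst (cs ! j1)) = length (fst (cs ! i1))"
      "length (fst (cs ! j2)) = length (fst (cs ! i2))"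
    and above: "\<And>t. i1 \<le> t \<Longrightarrow> t \<le> j1 \<Longrightarrow> length (fst (cs ! i1)) \<le> length (fst (cs ! t))"
      "\<And>t. i2 \<le> t \<Longrightarrow> t \<le> j2 \<Longrightarrow> length (fst (cs ! i2)) \<le> length (fst (cs ! t))"
    and match: "snd (cs ! i2) = snd (cs ! i1)" "hd (fst (cs ! i2)) = hd (fst (cs ! i1))"
      "snd (cs ! j2) = snd (cs ! j1)"
    and bound: "\<forall>x\<in>set cs. length (fst x) \<le> B"
  shows "reaches A c (pump es i1 (i2 - i1) j2 (j1 - j2) m) (last cs) (\<lambda>_. True)"
    and "reaches A c (pump es i1 (i2 - i1) j2 (j1 - j2) 0) (last cs) (\<lambda>h. h \<le> B)"
proof -
  obtain \<tau> \<beta> q q' where st: "cs ! i1 = (\<tau>, q)" "cs ! i2 = (\<beta> @ \<tau>, q)" "cs ! j2 = (\<beta> @ \<tau>, q')"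
    "cs ! j1 = (\<tau>, q')" and \<tau>: "\<tau> \<noteq> []" "hd (\<beta> @ \<tau>) = hd \<tau>" "set (\<beta> @ \<tau>) \<subseteq> alphabet A"
    by (rule nested_positions_stacks[OF r c ord lev above match])
  have len: "length cs = Suc (length es)" using run_shape(3)[OF r] .
  have bounded: "length (fst (cs ! t)) \<le> B" if "t \<le> length es" for t
    using bound len that by simp
  have p1: "reaches A (cs ! i1) (take (i2 - i1) (drop i1 es)) (cs ! i2) (\<lambda>h. length \<tau> \<le> h)"
    by (rule reaches_segment[OF r ord(1)]) (use ord above(1) st in auto)
  have mid: "reaches A (cs ! i2) (take (j2 - i2) (drop i2 es)) (cs ! j2)
      (\<lambda>h. length (\<beta> @ \<tau>) \<le> h \<and> h \<le> B)"
    by (rule reaches_segment[OF r ord(2)]) (use ord above(2) bounded st in auto)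
  have p2: "reaches A (cs ! j2) (take (j1 - j2) (drop j2 es)) (cs ! j1) (\<lambda>h. length \<tau> \<le> h)"
    by (rule reaches_segment[OF r ord(3)]) (use ord above(1) st in auto)
  note pumped = pump_nested_runs[OF p1[unfolded st] mid[unfolded st] p2[unfolded st] \<tau>, folded st]
  have "reaches A (cs ! 0) (take (i1 - 0) (drop 0 es)) (cs ! i1) (\<lambda>h. h \<le> B)"
    by (rule reaches_segment[OF r]) (use ord bounded in auto)
  then have pre: "reaches A c (take i1 es) (cs ! i1) (\<lambda>h. h \<le> B)"
    using run_shape(1,2)[OF r] by (simp add: hd_conv_nth)
  have "reaches A (cs ! j1) (take (length es - j1) (drop j1 es)) (cs ! length es) (\<lambda>h. h \<le> B)"
    by (rule reaches_segment[OF r]) (use ord bounded in auto)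
  then have suf: "reaches A (cs ! j1) (drop j1 es) (last cs) (\<lambda>h. h \<le> B)"
    using len run_shape(1)[OF r] by (simp add: last_conv_nth)
  show "reaches A c (pump es i1 (i2 - i1) j2 (j1 - j2) m) (last cs) (\<lambda>_. True)"
    unfolding pump_split[OF ord(1-3)]
    using reaches_append[OF reaches_mono[OF pre] reaches_append[OF pumped(1) reaches_mono[OF suf]]]
    by simp
  show "reaches A c (pump es i1 (i2 - i1) j2 (j1 - j2) 0) (last cs) (\<lambda>h. h \<le> B)"
    unfolding pump_split[OF ord(1-3)]
    using reaches_append[OF pre reaches_append[OF pumped(2) suf]] by simp
qed

lemma last_crossing:
  fixes h :: "nat \<Rightarrow> nat"
  assumes "\<And>t. t < T \<Longrightarrow> h (Suc t) \<le> Suc (h t)" and "h 0 \<le> k" and "k \<le> h T"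
  shows "\<exists>s\<le>T. h s = k \<and> (\<forall>t. s < t \<and> t \<le> T \<longrightarrow> k < h t)"
  using assms
proof (induction T)
  case 0
  then show ?case by auto
next
  case (Suc T)
  show ?case
  proof (cases "h (Suc T) = k")
    case True
    then show ?thesis by auto
  next
    case False
    then have "k \<le> h T" using Suc.prems(1)[of T] Suc.prems(3) by simp
    then obtain s where "s \<le> T" "h s = k" "\<forall>t. s < t \<and> t \<le> T \<longrightarrow> k < h t"
      using Suc by auto
    then show ?thesis using False Suc.prems(3) by (auto simp: le_Suc_eq)
  qed
qed

lemma first_crossing:
  fixes h :: "nat \<Rightarrow> nat"
  assumes "\<And>t. T \<le> t \<Longrightarrow> t < N \<Longrightarrow> h t \<le> Suc (h (Suc t))" and "T \<le> N"
    and "h N \<le> k" and "k \<le> h T"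
  shows "\<exists>s. T \<le> s \<and> s \<le> N \<and> h s = k \<and> (\<forall>t. T \<le> t \<and> t < s \<longrightarrow> k < h t)"
proof -
  define g where "g t = h (N - t)" for t
  have "\<exists>s\<le>N - T. g s = k \<and> (\<forall>t. s < t \<and> t \<le> N - T \<longrightarrow> k < g t)"
  proof (rule last_crossing)
    fix t assume "t < N - T"
    then show "g (Suc t) \<le> Suc (g t)"
      using assms(1)[of "N - Suc t"] unfolding g_def by (simp add: Suc_diff_Suc)
  qed (use assms(2-4) in \<open>simp_all add: g_def\<close>)
  then obtain s where s: "s \<le> N - T" "g s = k" "\<forall>t. s < t \<and> t \<le> N - T \<longrightarrow> k < g t" by blast
  have "\<forall>t. T \<le> t \<and> t < N - s \<longrightarrow> k < h t"
  proof (intro allI impI)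
    fix t assume "T \<le> t \<and> t < N - s"
    then have "s < N - t" "N - t \<le> N - T" "N - (N - t) = t" by auto
    then show "k < h t" using s(3) unfolding g_def by metis
  qed
  then show ?thesis using s(1,2) assms(2) unfolding g_def by (intro exI[of _ "N - s"]) auto
qed

lemma crossing_times:
  fixes h :: "nat \<Rightarrow> nat"
  assumes steps: "\<And>t. t < N \<Longrightarrow> h (Suc t) \<le> Suc (h t) \<and> h t \<le> Suc (h (Suc t))"
    and "T \<le> N"
  obtains a b where
    "\<And>k. max (h 0) (h N) \<le> k \<Longrightarrow> k \<le> h T \<Longrightarrow>
       a k \<le> T \<and> h (a k) = k \<and> (\<forall>t. a k < t \<and> t \<le> T \<longrightarrow> k < h t)"
    "\<And>k. max (h 0) (h N) \<le> k \<Longrightarrow> k \<le> h T \<Longrightarrow>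
       T \<le> b k \<and> b k \<le> N \<and> h (b k) = k \<and> (\<forall>t. T \<le> t \<and> t < b k \<longrightarrow> k < h t)"
proof -
  let ?L = "max (h 0) (h N)"
  have a_ex: "\<exists>s\<le>T. h s = k \<and> (\<forall>t. s < t \<and> t \<le> T \<longrightarrow> k < h t)"
    if "?L \<le> k" "k \<le> h T" for k
    by (rule last_crossing) (use steps \<open>T \<le> N\<close> that in auto)
  have b_ex: "\<exists>s. T \<le> s \<and> s \<le> N \<and> h s = k \<and> (\<forall>t. T \<le> t \<and> t < s \<longrightarrow> k < h t)"
    if "?L \<le> k" "k \<le> h T" for k
    by (rule first_crossing) (use steps \<open>T \<le> N\<close> that in auto)
  define a where "a k = (SOME s. s \<le> T \<and> h s = k \<and> (\<forall>t. s < t \<and> t \<le> T \<longrightarrow> k < h t))" for k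
  define b where "b k = (SOME s. T \<le> s \<and> s \<le> N \<and> h s = k \<and> (\<forall>t. T \<le> t \<and> t < s \<longrightarrow> k < h t))" for k
  show ?thesis
  proof
    show "a k \<le> T \<and> h (a k) = k \<and> (\<forall>t. a k < t \<and> t \<le> T \<longrightarrow> k < h t)"
      if "?L \<le> k" "k \<le> h T" for k
      using someI_ex[OF a_ex[OF that]] unfolding a_def by blast
    show "T \<le> b k \<and> b k \<le> N \<and> h (b k) = k \<and> (\<forall>t. T \<le> t \<and> t < b k \<longrightarrow> k < h t)"
      if "?L \<le> k" "k \<le> h T" for k
      using someI_ex[OF b_ex[OF that]] unfolding b_def by blast
  qed
qed

lemma level_crossings:
  fixes h :: "nat \<Rightarrow> nat"
  assumes steps: "\<And>t. t < N \<Longrightarrow> h (Suc t) \<le> Suc (h t) \<and> h t \<le> Suc (h (Suc t))"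
    and "T \<le> N"
  obtains a b where
    "\<And>k. max (h 0) (h N) \<le> k \<Longrightarrow> k \<le> h T \<Longrightarrow>
       a k \<le> T \<and> T \<le> b k \<and> b k \<le> N \<and> h (a k) = k \<and> h (b k) = k \<and>
       (\<forall>t. a k \<le> t \<and> t \<le> b k \<longrightarrow> k \<le> h t)"
    "\<And>k l. max (h 0) (h N) \<le> k \<Longrightarrow> k < l \<Longrightarrow> l \<le> h T \<Longrightarrow> a k < a l \<and> b l < b k"
proof -
  let ?L = "max (h 0) (h N)"
  obtain a b where
    a: "\<And>k. ?L \<le> k \<Longrightarrow> k \<le> h T \<Longrightarrow> a k \<le> T \<and> h (a k) = k \<and> (\<forall>t. a k < t \<and> t \<le> T \<longrightarrow> k < h t)"
    and b: "\<And>k. ?L \<le> k \<Longrightarrow> k \<le> h T \<Longrightarrow>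
      T \<le> b k \<and> b k \<le> N \<and> h (b k) = k \<and> (\<forall>t. T \<le> t \<and> t < b k \<longrightarrow> k < h t)"
    using crossing_times[of N h T, OF steps \<open>T \<le> N\<close>] by blast
  show ?thesis
  proof
    fix k assume k: "?L \<le> k" "k \<le> h T"
    have "k \<le> h t" if "a k \<le> t" "t \<le> b k" for t
    proof (cases "t \<le> T")
      case True
      then show ?thesis using a[OF k] that(1) le_less[of "a k" t] by (auto intro: less_imp_le)
    next
      case False
      then show ?thesis using b[OF k] that(2) le_less[of t "b k"] by (auto intro: less_imp_le)
    qed
    then show "a k \<le> T \<and> T \<le> b k \<and> b k \<le> N \<and> h (a k) = k \<and> h (b k) = k \<and>
        (\<forall>t. a k \<le> t \<and> t \<le> b k \<longrightarrow> k \<le> h t)"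
      using a[OF k] b[OF k] by auto
  next
    fix k l assume kl: "?L \<le> k" "k < l" "l \<le> h T"
    have ak: "a k \<le> T" "h (a k) = k" and al: "h (a l) = l" "\<forall>t. a l < t \<and> t \<le> T \<longrightarrow> l < h t"
      using a kl by auto
    have bk: "T \<le> b k" "h (b k) = k" and bl: "h (b l) = l" "\<forall>t. T \<le> t \<and> t < b l \<longrightarrow> l < h t"
      using b kl by auto
    have "\<not> a l < a k"
    proof
      assume "a l < a k"
      then have "l < h (a k)" using al(2) ak(1) by blast
      with ak(2) kl(2) show False by simp
    qed
    moreover have "a k \<noteq> a l" using ak(2) al(1) kl(2) by auto
    moreover have "\<not> b k < b l"
    proof
      assume "b k < b l"
      then have "l < h (b k)" using bl(2) bk(1) by blast
      with bk(2) kl(2) show False by simp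
    qed
    moreover have "b k \<noteq> b l" using bk(2) bl(1) kl(2) by auto
    ultimately show "a k < a l \<and> b l < b k" by auto
  qed
qed

lemma pigeonhole_levels:
  assumes "f ` {L..H} \<subseteq> X" and "finite X" and "card X < Suc H - L"
  obtains k l where "L \<le> k" "k < l" "l \<le> H" "f k = f l"
proof -
  have "\<not> inj_on f {L..H}"
  proof
    assume "inj_on f {L..H}"
    then have "card (f ` {L..H}) = Suc H - L" by (simp add: card_image)
    with card_mono[OF assms(2,1)] assms(3) show False by simp
  qed
  then obtain x y where xy: "x \<in> {L..H}" "y \<in> {L..H}" "x \<noteq> y" "f x = f y"
    unfolding inj_on_def by blast
  show ?thesis
  proof (cases "x < y")
    case True
    then show ?thesis using that[of x y] xy by auto
  next
    case False
    then show ?thesis using that[of y x] xy by auto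
  qed
qed

lemma ASH_run:
  assumes "run A c es = Some cs"
  shows "ASH A c es = Max (set (map (\<lambda>x. length (fst x)) cs)) - max (length (fst c)) (length (fst (last cs)))"
  using run_shape(1,2)[OF assms] assms by (simp add: ASH_def hd_map last_map)

text \<open>The number of triples (state, top symbol, state) is at most (|Q| |\<Gamma>|)^2, since \<Gamma>
  contains the bottom symbol.\<close>
lemma card_state_triples:
  assumes "is_wps A"
  shows "card (states A \<times> alphabet A \<times> states A) \<le> (card (states A) * card (alphabet A))^2"
proof -
  have "finite (alphabet A)" "bottom A \<in> alphabet A" using assms unfolding is_wps_def by auto
  then have "1 \<le> card (alphabet A)" by (metis One_nat_def Suc_leI card_gt_0_iff empty_iff)
  then show ?thesis by (simp add: card_cartesian_product power2_eq_square)
qed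

lemma run_peak:
  assumes r: "run A c es = Some cs"
  obtains T where "T \<le> length es" "length (fst (cs ! T)) = Max (set (map (\<lambda>x. length (fst x)) cs))"
    "max (length (fst (cs ! 0))) (length (fst (cs ! length es))) \<le> length (fst (cs ! T))"
    "ASH A c es = length (fst (cs ! T)) - max (length (fst (cs ! 0))) (length (fst (cs ! length es)))"
proof -
  define h where "h t = length (fst (cs ! t))" for t
  have len: "length cs = Suc (length es)" using run_shape(3)[OF r] .
  have "set cs = (\<lambda>t. cs ! t) ` {..length es}" using len by (auto simp: set_conv_nth less_Suc_eq_le)
  then have heights: "set (map (\<lambda>x. length (fst x)) cs) = h ` {..length es}"
    unfolding h_def by (simp add: image_image)
  have "Max (h ` {..length es}) \<in> h ` {..length es}" by (rule Max_in) auto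
  then obtain T where T: "T \<le> length es" "h T = Max (h ` {..length es})"
    by (metis atMost_iff imageE)
  moreover have "max (h 0) (h (length es)) \<le> h T" unfolding T(2) by (auto intro: Max_ge)
  moreover have "h 0 = length (fst c)" "h (length es) = length (fst (last cs))"
    using run_shape(1,2)[OF r] len unfolding h_def by (simp_all add: hd_conv_nth last_conv_nth)
  ultimately show ?thesis using that ASH_run[OF r] unfolding heights h_def by simp
qed

text \<open>The levels between the
  endpoint heights and the peak are crossed on the way up (at a k) and on the way down
  (at b k) in a nested fashion; by pigeonhole two levels k < l agree on the state and top
  symbol at a and on the state at b, and we take a k < a l \<le> b l < b k.\<close>
lemma high_run_nested_positions:
  assumes wps: "is_wps A" and r: "run A c es = Some cs" and c: "is_config A c"
    and high: "(card (states A) * card (alphabet A))^2 \<le> ASH A c es"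
  obtains i1 i2 j2 j1 where "i1 < i2" "i2 \<le> j2" "j2 < j1" "j1 \<le> length es"
    "length (fst (cs ! j1)) = length (fst (cs ! i1))" "length (fst (cs ! j2)) = length (fst (cs ! i2))"
    "\<And>t. i1 \<le> t \<Longrightarrow> t \<le> j1 \<Longrightarrow> length (fst (cs ! i1)) \<le> length (fst (cs ! t))"
    "\<And>t. i2 \<le> t \<Longrightarrow> t \<le> j2 \<Longrightarrow> length (fst (cs ! i2)) \<le> length (fst (cs ! t))"
    "snd (cs ! i2) = snd (cs ! i1)" "hd (fst (cs ! i2)) = hd (fst (cs ! i1))" "snd (cs ! j2) = snd (cs ! j1)"
proof -
  define N where "N = length es"
  define h where "h t = length (fst (cs ! t))" for t
  obtain T where T: "T \<le> N" "max (h 0) (h N) \<le> h T" and ash: "ASH A c es = h T - max (h 0) (h N)"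
    using run_peak[OF r] unfolding h_def N_def by metis
  let ?L = "max (h 0) (h N)" and ?H = "h T"
  have steps: "h (Suc t) \<le> Suc (h t) \<and> h t \<le> Suc (h (Suc t))" if "t < N" for t
    using run_height_step[OF r] that unfolding h_def N_def by blast
  obtain a b where
    ab: "\<And>k. ?L \<le> k \<Longrightarrow> k \<le> ?H \<Longrightarrow> a k \<le> T \<and> T \<le> b k \<and> b k \<le> N \<and> h (a k) = k \<and> h (b k) = k \<and>
         (\<forall>t. a k \<le> t \<and> t \<le> b k \<longrightarrow> k \<le> h t)"
    and nested: "\<And>k l. ?L \<le> k \<Longrightarrow> k < l \<Longrightarrow> l \<le> ?H \<Longrightarrow> a k < a l \<and> b l < b k"
    using level_crossings[of N h T, OF steps T(1)] by blast
  define f where "f k = (snd (cs ! a k), hd (fst (cs ! a k)), snd (cs ! b k))" for k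
  have "f ` {?L..?H} \<subseteq> states A \<times> alphabet A \<times> states A"
  proof
    fix x assume "x \<in> f ` {?L..?H}"
    then obtain k where k: "?L \<le> k" "k \<le> ?H" "x = f k" by auto
    have "is_config A (cs ! a k)" "is_config A (cs ! b k)"
      using run_configs[OF r c] ab[OF k(1,2)] T(1) run_shape(3)[OF r] unfolding N_def by auto
    then show "x \<in> states A \<times> alphabet A \<times> states A"
      using k(3) unfolding f_def is_config_def by auto
  qed
  moreover have "card (states A \<times> alphabet A \<times> states A) < Suc ?H - ?L"
    using card_state_triples[OF wps] high ash T(2) by linarith
  moreover have "finite (states A \<times> alphabet A \<times> states A)" using wps unfolding is_wps_def by auto
  ultimately obtain k l where kl: "?L \<le> k" "k < l" "l \<le> ?H" "f k = f l"
    using pigeonhole_levels by blast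
  have k: "a k \<le> T" "T \<le> b k" "b k \<le> N" "h (a k) = k" "h (b k) = k" "\<forall>t. a k \<le> t \<and> t \<le> b k \<longrightarrow> k \<le> h t"
    using ab[of k] kl by auto
  have l: "a l \<le> T" "T \<le> b l" "h (a l) = l" "h (b l) = l" "\<forall>t. a l \<le> t \<and> t \<le> b l \<longrightarrow> l \<le> h t"
    using ab[of l] kl by auto
  show ?thesis
  proof (rule that[of "a k" "a l" "b l" "b k"])
    show "a k < a l" "a l \<le> b l" "b l < b k" "b k \<le> length es"
      using nested[OF kl(1-3)] k(3) l(1,2) unfolding N_def by auto
    show "snd (cs ! a l) = snd (cs ! a k)" "hd (fst (cs ! a l)) = hd (fst (cs ! a k))"
      "snd (cs ! b l) = snd (cs ! b k)" using kl(4) unfolding f_def by auto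
  qed (use k l in \<open>auto simp: h_def\<close>)
qed

lemma high_run_has_pumpable_pair:
  assumes "is_wps A" and r: "run A c es = Some cs" and c: "is_config A c"
    and "(card (states A) * card (alphabet A))^2 \<le> ASH A c es"
  shows "\<exists>i k1 j k2. 0 < k1 \<and> 0 < k2 \<and> i + k1 \<le> j \<and> j + k2 \<le> length es \<and>
     (\<forall>m. reaches A c (pump es i k1 j k2 m) (last cs) (\<lambda>_. True)) \<and>
     reaches A c (pump es i k1 j k2 0) (last cs) (\<lambda>h. h \<le> Max (set (map (\<lambda>x. length (fst x)) cs)))"
proof -
  obtain i1 i2 j2 j1 where ord: "i1 < i2" "i2 \<le> j2" "j2 < j1" "j1 \<le> length es"
    and pos: "length (fst (cs ! j1)) = length (fst (cs ! i1))" "length (fst (cs ! j2)) = length (fst (cs ! i2))"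
    "\<And>t. i1 \<le> t \<Longrightarrow> t \<le> j1 \<Longrightarrow> length (fst (cs ! i1)) \<le> length (fst (cs ! t))"
    "\<And>t. i2 \<le> t \<Longrightarrow> t \<le> j2 \<Longrightarrow> length (fst (cs ! i2)) \<le> length (fst (cs ! t))"
    "snd (cs ! i2) = snd (cs ! i1)" "hd (fst (cs ! i2)) = hd (fst (cs ! i1))" "snd (cs ! j2) = snd (cs ! j1)"
    using high_run_nested_positions[OF assms] by blast
  have below: "\<forall>x\<in>set cs. length (fst x) \<le> Max (set (map (\<lambda>x. length (fst x)) cs))" by simp
  note pumped = pump_nested_positions[OF r c less_imp_le[OF ord(1)] ord(2) less_imp_le[OF ord(3)] ord(4) pos below]
  show ?thesis
    using pumped ord by (intro exI[of _ i1] exI[of _ "i2 - i1"] exI[of _ j2] exI[of _ "j1 - j2"]) auto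
qed

lemma pump_one:
  assumes "i + k1 \<le> j" and "j + k2 \<le> length es"
  shows "pump es i k1 j k2 1 = es"
proof -
  have "take (i + k1) es = take i es @ take k1 (drop i es)" by (simp add: take_add)
  moreover have "take j es = take (i + k1) es @ take (j - (i + k1)) (drop (i + k1) es)"
    using assms(1) take_add[of "i + k1" "j - (i + k1)" es] by simp
  moreover have "take (j + k2) es = take j es @ take k2 (drop j es)" by (simp add: take_add)
  ultimately have "take (j + k2) es = take i es @ take k1 (drop i es) @ take (j - (i + k1)) (drop (i + k1) es)
      @ take k2 (drop j es)" by simp
  then have "pump es i k1 j k2 1 = take (j + k2) es @ drop (j + k2) es" by (simp add: pump_def)
  then show ?thesis by simp
qed

lemma pump_weight:
  "path_weight A (pump es i k1 j k2 m) =
     path_weight A (pump es i k1 j k2 0) +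
     int m * (path_weight A (take k1 (drop i es)) + path_weight A (take k2 (drop j es)))"
proof -
  have rep: "path_weight A (concat (replicate m p)) = int m * path_weight A p" for p
    by (induction m) (auto simp: path_weight_def algebra_simps)
  show ?thesis unfolding pump_def by (simp add: path_weight_def rep[unfolded path_weight_def] algebra_simps)
qed

lemma ASH_mono:
  assumes r: "run A c es = Some cs"
    and lower: "reaches A c es' (last cs) (\<lambda>h. h \<le> Max (set (map (\<lambda>x. length (fst x)) cs)))"
  shows "ASH A c es' \<le> ASH A c es"
proof -
  obtain cs' where r': "run A c es' = Some cs'" and l': "last cs' = last cs"
    and hs: "\<forall>x\<in>set cs'. length (fst x) \<le> Max (set (map (\<lambda>x. length (fst x)) cs))"
    using lower unfolding reaches_def by blast
  have "Max (set (map (\<lambda>x. length (fst x)) cs')) \<le> Max (set (map (\<lambda>x. length (fst x)) cs))"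
    using hs run_shape(1)[OF r'] by (subst Max_le_iff) auto
  then show ?thesis using ASH_run[OF r] ASH_run[OF r'] l' by simp
qed

lemma remove_nonpositive_pair:
  assumes path: "path_from_to A c1 es c2" and r: "run A c1 es = Some cs"
    and ord: "i + k1 \<le> j" "j + k2 \<le> length es"
    and removal: "reaches A c1 (pump es i k1 j k2 0) c2 (\<lambda>h. h \<le> Max (set (map (\<lambda>x. length (fst x)) cs)))"
    and nonpos: "path_weight A (take k1 (drop i es)) + path_weight A (take k2 (drop j es)) \<le> 0"
  shows "path_from_to A c1 (pump es i k1 j k2 0) c2"
    and "path_weight A es \<le> path_weight A (pump es i k1 j k2 0)"
    and "ASH A c1 (pump es i k1 j k2 0) \<le> ASH A c1 es"
proof -
  have "is_config A c1" and c2: "last cs = c2"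
    using path r unfolding path_from_to_def is_path_def by auto
  then show "path_from_to A c1 (pump es i k1 j k2 0) c2"
    using removal unfolding reaches_def path_from_to_def is_path_def by auto
  show "path_weight A es \<le> path_weight A (pump es i k1 j k2 0)"
    using pump_weight[of A es i k1 j k2 1] pump_one[OF ord] nonpos by simp
  show "ASH A c1 (pump es i k1 j k2 0) \<le> ASH A c1 es"
    using ASH_mono[OF r] removal c2 by simp
qed

theorem lemma2:
  fixes A :: "('q, 'g) wps" and c1 c2 :: "('q, 'g) config" and n :: int and d :: nat
  assumes "is_wps A"
    and "\<exists>es. path_from_to A c1 es c2 \<and> path_weight A es \<ge> n"
    and "d = (LEAST h. \<exists>es. path_from_to A c1 es c2 \<and> path_weight A es \<ge> n \<and> ASH A c1 es = h)"
    and "d \<ge> (card (states A) * card (alphabet A))^2"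
  shows "\<exists>es. path_from_to A c1 es c2 \<and> ASH A c1 es = d \<and>
           (\<exists>i k1 j k2. pumpable_pair A c1 es i k1 j k2 \<and>
              path_weight A (take k1 (drop i es)) + path_weight A (take k2 (drop j es)) > 0)"
proof -
  define optimal where
    "optimal es \<longleftrightarrow> path_from_to A c1 es c2 \<and> path_weight A es \<ge> n \<and> ASH A c1 es = d" for es
  have d_min: "d \<le> ASH A c1 es" if "path_from_to A c1 es c2" "path_weight A es \<ge> n" for es
    using assms(3) that by (auto intro: Least_le)
  have "\<exists>es. optimal es"
    using LeastI_ex[where P = "\<lambda>h. \<exists>es. path_from_to A c1 es c2 \<and> path_weight A es \<ge> n \<and> ASH A c1 es = h"]
      assms(2,3) unfolding optimal_def by blast
  then obtain es where opt: "optimal es" and shortest: "\<And>es'. optimal es' \<Longrightarrow> length es \<le> length es'"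
    using ex_has_least_nat[of optimal _ length] by metis
  then obtain cs where c1: "is_config A c1" and r: "run A c1 es = Some cs" and c2: "last cs = c2"
    unfolding optimal_def path_from_to_def is_path_def by auto
  obtain i k1 j k2 where pos: "0 < k1" "0 < k2" and ord: "i + k1 \<le> j" "j + k2 \<le> length es"
    and pumps: "\<forall>m. reaches A c1 (pump es i k1 j k2 m) c2 (\<lambda>_. True)"
    and removal: "reaches A c1 (pump es i k1 j k2 0) c2 (\<lambda>h. h \<le> Max (set (map (\<lambda>x. length (fst x)) cs)))"
    using high_run_has_pumpable_pair[OF assms(1) r c1] assms(4) opt c2 unfolding optimal_def by auto
  have "pumpable_pair A c1 es i k1 j k2"
    using pos ord pumps c1 unfolding pumpable_pair_def is_path_def reaches_def by fastforce
  moreover have "path_weight A (take k1 (drop i es)) + path_weight A (take k2 (drop j es)) > 0"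
  proof (rule ccontr)
    assume "\<not> ?thesis"
    then have "path_from_to A c1 (pump es i k1 j k2 0) c2" "n \<le> path_weight A (pump es i k1 j k2 0)"
      "ASH A c1 (pump es i k1 j k2 0) \<le> d"
      using remove_nonpositive_pair[OF _ r ord removal] opt unfolding optimal_def by (auto intro: order.trans)
    then have "optimal (pump es i k1 j k2 0)" using d_min unfolding optimal_def by force
    then show False using shortest pos ord unfolding pump_def by fastforce
  qed
  ultimately show ?thesis using opt unfolding optimal_def by blast
qed

end
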